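(* In the noiseless pooled data problem with fixed $d$ and fixed $\pi$ (all $\pi_t>0$), suppose the entries of $\mathbf X$ are i.i.d. $\mathrm{Bernoulli}(q)$ with $q=q(p)$ satisfying $pq\to\infty$ and $p(1-q)\to\infty$. Then for any decoder achieving $P_e\le\delta$, $\delta\in(0,1)$ fixed, it is necessary that $$n\ \ge\ \frac{p}{\log\big(pq(1-q)\big)}\left(\max_{r\in\{1,\dots,d-1\}}\frac{2\big(H(\pi)-H(\pi^{(r)})\big)}{d-r}\right)(1-\delta-o(1))\quad\text{as }p\to\infty.$$
   Context: Setup: $\pi=(\pi_1,\dots,\pi_d)$ is a probability vector not depending on $p$ (with $p\pi_t$ integers, rounding implicitly). $\mathcal B(\pi)$ is the set of $b\in[d]^p$ with exactly $p\pi_t$ entries equal to $t$; $\beta$ is uniform on $\mathcal B(\pi)$. The test matrix $\mathbf X\in\{0,1\}^{n\times p}$ with rows $X^{(i)}$ is independent of $\beta$. Noiseless model: $Y^{(i)}=(N_1(\beta,X^{(i)}),\dots,N_d(\beta,X^{(i)}))$ with $N_t(\beta,X)=\sum_j\mathbf 1\{\beta_j=t,X_j=1\}$. A decoder outputs $\hat\beta$ from $(\mathbf X,\mathbf Y)$ and $P_e=\mathbb P[\hat\beta\ne\beta]$. Logs natural, entropy in nats. For $r\in\{1,\dots,d-1\}$, $\pi^{(r)}$ is the length-$r$ probability vector whose first entry is the sum of the largest $d-r+1$ entries of $\pi$ and whose remaining $r-1$ entries are the remaining entries of $\pi$. *)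

theory Defs
  imports "HOL-Analysis.Analysis"
begin

definition entropy_list :: "real list \<Rightarrow> real" where
  "entropy_list l = - sum_list (map (\<lambda>x. x * ln x) l)"

definition entropy_vec :: "nat \<Rightarrow> (nat \<Rightarrow> real) \<Rightarrow> real" where
  "entropy_vec d \<pi> = entropy_list (map \<pi> [0..<d])"

definition sorted_desc :: "nat \<Rightarrow> (nat \<Rightarrow> real) \<Rightarrow> real list" where
  "sorted_desc d \<pi> = rev (sort (map \<pi> [0..<d]))"

definition pi_r :: "nat \<Rightarrow> (nat \<Rightarrow> real) \<Rightarrow> nat \<Rightarrow> real list" where
  "pi_r d \<pi> r = sum_list (take (d - r + 1) (sorted_desc d \<pi>)) # drop (d - r + 1) (sorted_desc d \<pi>)"

definition test_mats :: "nat \<Rightarrow> nat \<Rightarrow> (nat \<Rightarrow> nat \<Rightarrow> bool) set" where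
  "test_mats n p = {0..<n} \<rightarrow>\<^sub>E ({0..<p} \<rightarrow>\<^sub>E (UNIV :: bool set))"

definition bern_weight :: "nat \<Rightarrow> nat \<Rightarrow> real \<Rightarrow> (nat \<Rightarrow> nat \<Rightarrow> bool) \<Rightarrow> real" where
  "bern_weight n p q X = (\<Prod>i<n. \<Prod>j<p. if X i j then q else 1 - q)"

definition label_set :: "nat \<Rightarrow> nat \<Rightarrow> (nat \<Rightarrow> nat) \<Rightarrow> (nat \<Rightarrow> nat) set" where
  "label_set d p cnt = {b \<in> {0..<p} \<rightarrow>\<^sub>E {0..<d}. \<forall>t<d. card {j. j < p \<and> b j = t} = cnt t}"

definition outcomes :: "nat \<Rightarrow> nat \<Rightarrow> nat \<Rightarrow> (nat \<Rightarrow> nat) \<Rightarrow> (nat \<Rightarrow> nat \<Rightarrow> bool) \<Rightarrow> nat \<Rightarrow> nat \<Rightarrow> nat" where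
  "outcomes d n p b X = (\<lambda>i t. if i < n \<and> t < d then card {j. j < p \<and> b j = t \<and> X i j} else 0)"

text \<open>Error probability P[hat beta \<noteq> beta] of a (deterministic) decoder, beta uniform on
  B(pi) and independent of X with i.i.d. Bernoulli(q) entries.\<close>
definition error_prob ::
  "nat \<Rightarrow> nat \<Rightarrow> nat \<Rightarrow> (nat \<Rightarrow> nat) \<Rightarrow> real
   \<Rightarrow> ((nat \<Rightarrow> nat \<Rightarrow> bool) \<Rightarrow> (nat \<Rightarrow> nat \<Rightarrow> nat) \<Rightarrow> nat \<Rightarrow> nat) \<Rightarrow> real" where
  "error_prob d n p cnt q dec =
     (1 / real (card (label_set d p cnt))) *
     (\<Sum>b\<in>label_set d p cnt. \<Sum>X\<in>test_mats n p.
        bern_weight n p q X *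
        (if (\<exists>j<p. dec X (outcomes d n p b X) j \<noteq> b j) then 1 else 0))"

end

theory Submission
  imports Defs "HOL-Combinatorics.Multiset_Permutations"
begin

text \<open>
  Fix a set \<open>G\<close> of classes, one of its classes \<open>g\<close>, and let \<open>F = G - {g}\<close>. When the decoder
  succeeds, the labeling is determined by its merged labeling (every class of \<open>G\<close> relabelled
  as \<open>g\<close>) together with the test outcomes for the classes in \<open>F\<close>. The merged labelings are
  fewer than the labelings by the multinomial factor \<open>M\<close> of the class sizes in \<open>G\<close>, and
  \<open>ln M \<sim> p D\<close> by Stirling's bounds, where \<open>D\<close> is the entropy lost by merging \<open>G\<close>. Each outcome
  for a class \<open>t \<in> F\<close> is binomial with standard deviation \<open>s\<^sub>t \<le> sqrt (p q (1 - q))\<close>, so weighting a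
  correctly decoded labeling by \<open>exp\<close> of minus its normalised deviation and applying Markov's
  inequality to that deviation shows that success probability \<open>1 - \<delta>\<close> forces
  \<open>ln M \<le> n |F| (ln (p q (1 - q)) / 2 + O(1))\<close>. Hence \<open>n \<ge> p / ln (p q (1 - q)) \<cdot> 2 D / |F| \<cdot> (1 - o(1))\<close>;
  the theorem takes for \<open>G\<close> the \<open>d - r + 1\<close> most likely classes of the maximising \<open>r\<close>.
\<close>

section \<open>Factorials and multinomial coefficients\<close>

lemma power_le_exp_mult_fact: "real k ^ k \<le> exp (real k) * fact k"
proof -
  have "(\<Sum>i\<in>{k}. real k ^ i /\<^sub>R fact i) \<le> (\<Sum>i. real k ^ i /\<^sub>R fact i)"
    using summable_exp_generic[of "real k"] by (intro sum_le_suminf) auto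
  then show ?thesis by (simp add: exp_def divide_le_eq field_simps)
qed

lemma exp_one_le_one_plus_inverse_power:
  assumes "k \<ge> 1"
  shows "exp 1 \<le> (1 + 1 / real k) ^ (k + 1)"
proof -
  have k: "real k > 0" using assms by simp
  have "ln (real k / (real k + 1)) \<le> real k / (real k + 1) - 1"
    using k by (intro ln_le_minus_one) auto
  moreover have "ln (real k / (real k + 1)) = - ln (1 + 1 / real k)"
    using k by (simp add: ln_div field_simps)
  ultimately have "1 \<le> (real k + 1) * ln (1 + 1 / real k)"
    using k by (simp add: field_simps)
  also have "\<dots> = ln ((1 + 1 / real k) ^ (k + 1))"
    using k by (subst ln_realpow) (auto intro: add_pos_nonneg)
  finally show ?thesis
    using k by (simp add: ln_ge_iff add_pos_nonneg)
qed

lemma fact_le_exp_power: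
  assumes "k \<ge> 1"
  shows "fact k \<le> exp 1 * real k ^ (k + 1) * exp (- real k)"
  using assms
proof (induction k rule: dec_induct)
  case base
  then show ?case by (simp add: exp_minus)
next
  case (step m)
  have "exp 1 * real m ^ (m + 1) \<le> ((1 + 1 / real m) * real m) ^ (m + 1)"
    unfolding power_mult_distrib using exp_one_le_one_plus_inverse_power[OF step(1)] by (intro mult_right_mono) auto
  also have "(1 + 1 / real m) * real m = real (m + 1)"
    using step(1) by (simp add: field_simps)
  finally have e: "exp 1 * real m ^ (m + 1) \<le> real (m + 1) ^ (m + 1)" .
  have "fact (Suc m) = real (m + 1) * fact m"
    by simp
  also have "\<dots> \<le> real (m + 1) * (exp 1 * real m ^ (m + 1) * exp (- real m))"
    using step by (intro mult_left_mono) auto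
  also have "\<dots> = exp 1 * (exp 1 * real m ^ (m + 1)) * real (m + 1) * exp (- real (Suc m))"
    by (simp add: exp_diff exp_minus field_simps)
  also have "\<dots> \<le> exp 1 * real (m + 1) ^ (m + 1) * real (m + 1) * exp (- real (Suc m))"
    using e by (intro mult_right_mono mult_left_mono) auto
  finally show ?case by (simp add: mult_ac)
qed

lemma ln_multinomial_ge:
  fixes c :: "'a \<Rightarrow> nat"
  assumes "finite G" and pos: "\<And>t. t \<in> G \<Longrightarrow> c t \<ge> 1"
  defines "N \<equiv> \<Sum>t\<in>G. c t"
  shows "real N * ln (real N) - (\<Sum>t\<in>G. real (c t) * ln (real (c t))) - (\<Sum>t\<in>G. 1 + ln (real (c t)))
    \<le> ln (fact N / (\<Prod>t\<in>G. fact (c t)))"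
proof -
  have lower: "real N * ln (real N) - real N \<le> ln (fact N)"
  proof (cases "N = 0")
    case False
    then have "ln (real N ^ N) \<le> ln (exp (real N) * fact N)"
      using power_le_exp_mult_fact[of N] by simp
    then show ?thesis using False by (simp add: ln_mult ln_realpow)
  qed simp
  have upper: "ln (fact (c t)) \<le> 1 + real (c t) * ln (real (c t)) - real (c t) + ln (real (c t))"
    if "t \<in> G" for t
  proof -
    have "ln (fact (c t)) \<le> ln (exp 1 * real (c t) ^ (c t + 1) * exp (- real (c t)))"
      using fact_le_exp_power[OF pos[OF that]] pos[OF that] by simp
    also have "\<dots> = 1 + (real (c t) + 1) * ln (real (c t)) - real (c t)"
      using pos[OF that] by (simp add: ln_mult ln_realpow algebra_simps)
    finally show ?thesis by (simp add: algebra_simps)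
  qed
  have "ln (fact N / (\<Prod>t\<in>G. fact (c t))) = ln (fact N) - ln (\<Prod>t\<in>G. fact (c t) :: real)"
    using prod_pos[of G "\<lambda>t. fact (c t) :: real"] by (simp add: ln_div)
  also have "ln (\<Prod>t\<in>G. fact (c t)) = (\<Sum>t\<in>G. ln (fact (c t) :: real))"
    using assms(1) by (intro ln_prod) auto
  moreover have "real N = (\<Sum>t\<in>G. real (c t))"
    by (simp add: N_def)
  ultimately show ?thesis
    using lower sum_mono[of G "\<lambda>t. ln (fact (c t))", OF upper]
    by (simp add: sum.distrib sum_subtractf)
qed

section \<open>Labelings with prescribed class sizes\<close>

definition labelings :: "nat \<Rightarrow> 'a set \<Rightarrow> ('a \<Rightarrow> nat) \<Rightarrow> (nat \<Rightarrow> 'a) set" where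
  "labelings p A k = {f \<in> {0..<p} \<rightarrow>\<^sub>E A. \<forall>t\<in>A. card {j. j < p \<and> f j = t} = k t}"

lemma label_set_eq_labelings: "label_set d p cnt = labelings p {0..<d} cnt"
  by (auto simp: label_set_def labelings_def)

lemma finite_labelings: "finite A \<Longrightarrow> finite (labelings p A k)"
  unfolding labelings_def by (rule finite_subset[of _ "{0..<p} \<rightarrow>\<^sub>E A"]) (auto intro: finite_PiE)

lemma finite_label_set: "finite (label_set d p cnt)"
  by (simp add: label_set_eq_labelings finite_labelings)

lemma count_mset_map_upt: "count (mset (map f [0..<p])) t = card {j. j < p \<and> f j = t}"
proof -
  have "count (mset (map f [0..<p])) t = length (filter (\<lambda>j. f j = t) [0..<p])"
    by (induction p) auto
  also have "\<dots> = card ({j. f j = t} \<inter> {0..<p})"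
    by (simp add: distinct_length_filter)
  finally show ?thesis
    by (simp add: Int_def conj_commute)
qed

lemma count_replicate_mset_sum:
  "finite A \<Longrightarrow> count (\<Sum>t\<in>A. replicate_mset (k t) t) u = (if u \<in> A then k u else 0)"
  by (simp add: count_sum)

lemma mset_map_eq_iff_labelings:
  assumes "finite A" "f \<in> {0..<p} \<rightarrow>\<^sub>E A"
  shows "mset (map f [0..<p]) = (\<Sum>t\<in>A. replicate_mset (k t) t) \<longleftrightarrow> f \<in> labelings p A k"
proof -
  have "card {j. j < p \<and> f j = t} = 0" if "t \<notin> A" for t
    using assms(2) that by (auto simp: PiE_iff)
  moreover have "mset (map f [0..<p]) = (\<Sum>t\<in>A. replicate_mset (k t) t) \<longleftrightarrow>
      (\<forall>t. card {j. j < p \<and> f j = t} = count (\<Sum>t\<in>A. replicate_mset (k t) t) t)"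
    by (simp only: multiset_eq_iff count_mset_map_upt)
  ultimately show ?thesis
    using assms by (auto simp: count_replicate_mset_sum labelings_def)
qed

lemma bij_betw_labelings_permutations:
  assumes "finite A" "(\<Sum>t\<in>A. k t) = p"
  shows "bij_betw (\<lambda>f. map f [0..<p]) (labelings p A k) (permutations_of_multiset (\<Sum>t\<in>A. replicate_mset (k t) t))"
proof (rule bij_betw_byWitness[where f' = "\<lambda>xs. restrict ((!) xs) {0..<p}"])
  define M where "M = (\<Sum>t\<in>A. replicate_mset (k t) t)"
  have size_M: "size M = p" and set_M: "set_mset M \<subseteq> A"
    using assms count_replicate_mset_sum[OF assms(1), of k] by (auto simp: M_def set_mset_def split: if_splits)
  show "\<forall>f\<in>labelings p A k. restrict ((!) (map f [0..<p])) {0..<p} = f"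
    by (auto simp: labelings_def PiE_iff restrict_def fun_eq_iff extensional_def)
  show "\<forall>xs\<in>permutations_of_multiset M. map (restrict ((!) xs) {0..<p}) [0..<p] = xs"
    using size_M by (auto simp: permutations_of_multiset_def list_eq_iff_nth_eq dest: arg_cong[of _ _ size])
  show "(\<lambda>f. map f [0..<p]) ` labelings p A k \<subseteq> permutations_of_multiset M"
    using mset_map_eq_iff_labelings[OF assms(1)]
    by (auto simp: permutations_of_multiset_def labelings_def M_def)
  show "(\<lambda>xs. restrict ((!) xs) {0..<p}) ` permutations_of_multiset M \<subseteq> labelings p A k"
  proof safe
    fix xs assume xs: "xs \<in> permutations_of_multiset M"
    then have "length xs = p" "set xs \<subseteq> A"
      using size_M set_M by (auto simp: permutations_of_multiset_def dest: arg_cong[of _ _ size])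
    then have "restrict ((!) xs) {0..<p} \<in> {0..<p} \<rightarrow>\<^sub>E A"
      by auto
    moreover have "map (restrict ((!) xs) {0..<p}) [0..<p] = xs"
      using \<open>length xs = p\<close> by (simp add: list_eq_iff_nth_eq)
    moreover have "mset xs = M"
      using xs by (simp add: permutations_of_multiset_def)
    ultimately show "restrict ((!) xs) {0..<p} \<in> labelings p A k"
      using mset_map_eq_iff_labelings[OF assms(1)] unfolding M_def by metis
  qed
qed

lemma card_labelings:
  assumes "finite A" and "(\<Sum>t\<in>A. k t) = p"
  shows "card (labelings p A k) * (\<Prod>t\<in>A. fact (k t)) = fact p"
proof -
  define M where "M = (\<Sum>t\<in>A. replicate_mset (k t) t)"
  have count_M: "count M t = (if t \<in> A then k t else 0)" for t
    using count_replicate_mset_sum[OF assms(1)] by (simp add: M_def)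
  have "card (labelings p A k) = card (permutations_of_multiset M)"
    unfolding M_def using bij_betw_labelings_permutations[OF assms] by (rule bij_betw_same_card)
  moreover have "set_mset M \<subseteq> A"
    using count_M by (auto simp: set_mset_def split: if_splits)
  then have "(\<Prod>t\<in>set_mset M. fact (count M t)) = (\<Prod>t\<in>A. fact (k t) :: nat)"
    using assms(1) count_M by (intro prod.mono_neutral_cong_left) (auto simp: not_in_iff)
  moreover have "size M = p"
    using assms(2) by (simp add: M_def)
  ultimately show ?thesis
    using card_permutations_of_multiset_aux[of M] by simp
qed

definition merge_labels :: "'a set \<Rightarrow> 'a \<Rightarrow> nat \<Rightarrow> (nat \<Rightarrow> 'a) \<Rightarrow> nat \<Rightarrow> 'a" where
  "merge_labels F g p b = restrict (\<lambda>j. if b j \<in> F then g else b j) {0..<p}"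

lemma card_label_mem_eq_sum:
  fixes b :: "nat \<Rightarrow> 'a"
  assumes "finite G"
  shows "card {j. j < p \<and> b j \<in> G \<and> P j} = (\<Sum>u\<in>G. card {j. j < p \<and> b j = u \<and> P j})"
proof -
  have "{j. j < p \<and> b j \<in> G \<and> P j} = (\<Union>u\<in>G. {j. j < p \<and> b j = u \<and> P j})"
    by auto
  also have "card \<dots> = (\<Sum>u\<in>G. card {j. j < p \<and> b j = u \<and> P j})"
    using assms by (intro card_UN_disjoint) auto
  finally show ?thesis .
qed

lemma card_merge_labels:
  assumes "finite F" "g \<notin> F"
  shows "card {j. j < p \<and> merge_labels F g p b j = t \<and> P j} =
    (if t = g then (\<Sum>u\<in>insert g F. card {j. j < p \<and> b j = u \<and> P j})
     else if t \<in> F then 0 else card {j. j < p \<and> b j = t \<and> P j})"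
proof -
  have "{j. j < p \<and> merge_labels F g p b j = t \<and> P j} =
    (if t = g then {j. j < p \<and> b j \<in> insert g F \<and> P j}
     else if t \<in> F then {} else {j. j < p \<and> b j = t \<and> P j})"
    using assms(2) by (auto simp: merge_labels_def)
  then show ?thesis
    using assms card_label_mem_eq_sum[of "insert g F" p b P] by simp
qed

lemma merge_labels_in_labelings:
  assumes "finite F" "F \<subseteq> A" "g \<in> A" "g \<notin> F" and b: "b \<in> labelings p A k"
  shows "merge_labels F g p b \<in> labelings p (A - F) (k(g := \<Sum>u\<in>insert g F. k u))"
proof -
  have card_b: "card {j. j < p \<and> b j = t} = k t" if "t \<in> A" for t
    using b that by (simp add: labelings_def)
  have "(\<Sum>u\<in>insert g F. card {j. j < p \<and> b j = u}) = (\<Sum>u\<in>insert g F. k u)"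
    using assms(2,3) card_b by (intro sum.cong) auto
  then have "card {j. j < p \<and> merge_labels F g p b j = t} = (k(g := \<Sum>u\<in>insert g F. k u)) t"
    if "t \<in> A - F" for t
    using card_merge_labels[OF assms(1,4), of p b t "\<lambda>_. True"] card_b that by auto
  moreover have "merge_labels F g p b \<in> {0..<p} \<rightarrow>\<^sub>E A - F"
    using b assms(3,4) by (auto simp: merge_labels_def labelings_def PiE_iff)
  ultimately show ?thesis
    by (simp add: labelings_def)
qed

lemma card_labelings_merge:
  assumes "finite A" "F \<subseteq> A" "g \<in> A" "g \<notin> F" and "(\<Sum>t\<in>A. k t) = p"
  defines "N \<equiv> \<Sum>u\<in>insert g F. k u"
  shows "card (labelings p A k) * (\<Prod>u\<in>insert g F. fact (k u)) =
    card (labelings p (A - F) (k(g := N))) * fact N"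
proof -
  define R where "R = (\<Prod>t\<in>A - insert g F. fact (k t) :: nat)"
  have gF: "insert g F \<subseteq> A" "finite (insert g F)"
    using assms(1-3) finite_subset by auto
  have A_F: "A - F = insert g (A - insert g F)" "g \<notin> A - insert g F" "finite (A - insert g F)"
    using assms(1,3,4) by auto
  have k_upd: "(k(g := N)) t = k t" if "t \<in> A - insert g F" for t
    using that by simp
  have "(\<Sum>t\<in>A - F. (k(g := N)) t) = N + (\<Sum>t\<in>A - insert g F. (k(g := N)) t)"
    unfolding A_F(1) using A_F(2,3) by simp
  also have "\<dots> = N + (\<Sum>t\<in>A - insert g F. k t)"
    using sum.cong[OF refl k_upd] by simp
  also have "\<dots> = p"
    using assms(1,5) gF by (simp add: N_def sum.subset_diff[of "insert g F" A])
  finally have card_merged: "card (labelings p (A - F) (k(g := N))) * (\<Prod>t\<in>A - F. fact ((k(g := N)) t)) = fact p"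
    using assms(1) by (intro card_labelings) auto
  have "(\<Prod>t\<in>A - F. fact ((k(g := N)) t)) = fact N * (\<Prod>t\<in>A - insert g F. fact ((k(g := N)) t))"
    unfolding A_F(1) using A_F(2,3) by simp
  also have "\<dots> = fact N * R"
    unfolding R_def using prod.cong[OF refl, of _ "\<lambda>t. fact ((k(g := N)) t)" "\<lambda>t. fact (k t)"] k_upd by simp
  finally have "card (labelings p (A - F) (k(g := N))) * fact N * R = fact p"
    using card_merged by (simp add: mult.assoc)
  moreover have "card (labelings p A k) * (\<Prod>u\<in>insert g F. fact (k u)) * R = fact p"
    using card_labelings[OF assms(1,5)] assms(1) gF
    by (simp add: R_def prod.subset_diff[of "insert g F" A] mult_ac)
  moreover have "R > 0"
    by (simp add: R_def prod_pos)
  ultimately show ?thesis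
    by (metis mult_right_cancel not_less0)
qed

lemma label_count_eq_if_merge_labels_eq:
  assumes "finite F" "g \<notin> F"
    and merge: "merge_labels F g p b1 = merge_labels F g p b2"
    and on_F: "\<And>u. u \<in> F \<Longrightarrow> card {j. j < p \<and> b1 j = u \<and> P j} = card {j. j < p \<and> b2 j = u \<and> P j}"
  shows "card {j. j < p \<and> b1 j = t \<and> P j} = card {j. j < p \<and> b2 j = t \<and> P j}"
proof -
  have merged: "(if t = g then (\<Sum>u\<in>insert g F. card {j. j < p \<and> b1 j = u \<and> P j})
       else if t \<in> F then 0 else card {j. j < p \<and> b1 j = t \<and> P j}) =
     (if t = g then (\<Sum>u\<in>insert g F. card {j. j < p \<and> b2 j = u \<and> P j})
       else if t \<in> F then 0 else card {j. j < p \<and> b2 j = t \<and> P j})" for t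
    using card_merge_labels[OF assms(1,2), of p b1 t P] card_merge_labels[OF assms(1,2), of p b2 t P]
    by (simp only: merge)
  consider "t \<in> F" | "t = g" | "t \<notin> F" "t \<noteq> g"
    by blast
  then show ?thesis
  proof cases
    case 2
    have "(\<Sum>u\<in>F. card {j. j < p \<and> b1 j = u \<and> P j}) = (\<Sum>u\<in>F. card {j. j < p \<and> b2 j = u \<and> P j})"
      using on_F by (rule sum.cong[OF refl])
    then show ?thesis
      using merged[of g] assms(1,2) 2 by simp
  qed (use on_F merged[of t] in auto)
qed

section \<open>Bernoulli test matrices\<close>

definition test_rows :: "nat \<Rightarrow> (nat \<Rightarrow> bool) set" where
  "test_rows p = {0..<p} \<rightarrow>\<^sub>E UNIV"

definition row_weight :: "nat \<Rightarrow> real \<Rightarrow> (nat \<Rightarrow> bool) \<Rightarrow> real" where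
  "row_weight p q r = (\<Prod>j<p. if r j then q else 1 - q)"

lemma test_mats_eq: "test_mats n p = {0..<n} \<rightarrow>\<^sub>E test_rows p"
  by (simp add: test_mats_def test_rows_def)

lemma finite_test_rows: "finite (test_rows p)"
  by (simp add: test_rows_def finite_PiE)

lemma bern_weight_eq_prod_row_weight: "bern_weight n p q X = (\<Prod>i<n. row_weight p q (X i))"
  by (simp add: bern_weight_def row_weight_def)

lemma row_weight_nonneg: "0 \<le> q \<Longrightarrow> q \<le> 1 \<Longrightarrow> row_weight p q r \<ge> 0"
  by (simp add: row_weight_def prod_nonneg)

lemma bern_weight_nonneg: "0 \<le> q \<Longrightarrow> q \<le> 1 \<Longrightarrow> bern_weight n p q X \<ge> 0"
  by (simp add: bern_weight_eq_prod_row_weight row_weight_nonneg prod_nonneg)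

lemma sum_row_weight_factor:
  fixes q :: real and h :: "nat \<Rightarrow> bool \<Rightarrow> real"
  shows "(\<Sum>r\<in>test_rows p. \<Prod>j<p. (if r j then q else 1 - q) * h j (r j)) =
    (\<Prod>j<p. q * h j True + (1 - q) * h j False)"
proof -
  have "(\<Prod>j\<in>{0..<p}. \<Sum>y\<in>UNIV. (if y then q else 1 - q) * h j y) =
      (\<Sum>r\<in>{0..<p} \<rightarrow>\<^sub>E UNIV. \<Prod>j\<in>{0..<p}. (if r j then q else 1 - q) * h j (r j))"
    by (rule prod_sum_PiE) auto
  then show ?thesis
    by (simp add: test_rows_def lessThan_atLeast0 UNIV_bool add.commute)
qed

lemma sum_row_weight: "(\<Sum>r\<in>test_rows p. row_weight p q r) = 1"
  using sum_row_weight_factor[where h = "\<lambda>_ _. 1"] by (simp add: row_weight_def)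

lemma sum_bern_weight_row:
  assumes "i < n"
  shows "(\<Sum>X\<in>test_mats n p. bern_weight n p q X * h (X i)) = (\<Sum>r\<in>test_rows p. row_weight p q r * h r)"
proof -
  define f where "f = (\<lambda>i' r. row_weight p q r * (if i' = i then h r else 1))"
  have "bern_weight n p q X * h (X i) = (\<Prod>i'\<in>{0..<n}. f i' (X i'))" for X
    using assms by (simp add: f_def bern_weight_eq_prod_row_weight prod.distrib lessThan_atLeast0)
  then have "(\<Sum>X\<in>test_mats n p. bern_weight n p q X * h (X i)) = (\<Prod>i'\<in>{0..<n}. \<Sum>r\<in>test_rows p. f i' r)"
    unfolding test_mats_eq by (simp add: prod_sum_PiE finite_test_rows)
  also have "\<dots> = (\<Prod>i'\<in>{0..<n}. if i' = i then (\<Sum>r\<in>test_rows p. row_weight p q r * h r) else 1)"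
    by (intro prod.cong) (auto simp: f_def sum_row_weight)
  also have "\<dots> = (\<Sum>r\<in>test_rows p. row_weight p q r * h r)"
    using assms by simp
  finally show ?thesis .
qed

lemma sum_bern_weight: "(\<Sum>X\<in>test_mats n p. bern_weight n p q X) = 1"
proof (cases n)
  case 0
  then show ?thesis by (simp add: test_mats_def bern_weight_def)
next
  case (Suc m)
  then show ?thesis
    using sum_bern_weight_row[of 0 n p q "\<lambda>_. 1"] by (simp add: sum_row_weight)
qed

lemma sum_row_weight_centered_mult:
  assumes "j < p" "k < p"
  shows "(\<Sum>r\<in>test_rows p. row_weight p q r * ((of_bool (r j) - q) * (of_bool (r k) - q))) =
    (if j = k then q * (1 - q) else 0)"
proof -
  define h where "h = (\<lambda>a y. (if a = j then of_bool y - q else 1) * (if a = k then of_bool y - q else 1))"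
  have "row_weight p q r * ((of_bool (r j) - q) * (of_bool (r k) - q)) =
      (\<Prod>a<p. (if r a then q else 1 - q) * h a (r a))" for r
    using assms by (simp add: h_def row_weight_def prod.distrib prod.delta)
  then have "(\<Sum>r\<in>test_rows p. row_weight p q r * ((of_bool (r j) - q) * (of_bool (r k) - q))) =
      (\<Prod>a<p. q * h a True + (1 - q) * h a False)"
    by (simp add: sum_row_weight_factor)
  also have "\<dots> = (if j = k then q * (1 - q) else 0)"
  proof (cases "j = k")
    case True
    then have "(\<Prod>a<p. q * h a True + (1 - q) * h a False) = (\<Prod>a<p. if a = j then q * (1 - q) else 1)"
      by (intro prod.cong) (auto simp: h_def algebra_simps power2_eq_square)
    then show ?thesis
      using True assms by simp
  next
    case False
    then have "q * h j True + (1 - q) * h j False = 0"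
      by (simp add: h_def algebra_simps)
    then show ?thesis
      using False assms by (auto intro: prod_zero bexI[of _ j])
  qed
  finally show ?thesis .
qed

lemma sum_row_weight_centered_sq:
  assumes "J \<subseteq> {0..<p}"
  shows "(\<Sum>r\<in>test_rows p. row_weight p q r * (\<Sum>j\<in>J. of_bool (r j) - q)\<^sup>2) = real (card J) * (q * (1 - q))"
proof -
  have "(\<Sum>r\<in>test_rows p. row_weight p q r * (\<Sum>j\<in>J. of_bool (r j) - q)\<^sup>2) =
      (\<Sum>j\<in>J. \<Sum>k\<in>J. \<Sum>r\<in>test_rows p. row_weight p q r * ((of_bool (r j) - q) * (of_bool (r k) - q)))"
    by (simp add: power2_eq_square sum_product sum_distrib_left sum.swap[of _ "test_rows p"] mult_ac)
  also have "\<dots> = (\<Sum>j\<in>J. \<Sum>k\<in>J. if j = k then q * (1 - q) else 0)"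
    using assms by (intro sum.cong refl) (auto simp: sum_row_weight_centered_mult subset_iff)
  also have "\<dots> = real (card J) * (q * (1 - q))"
    using finite_subset[OF assms] by simp
  finally show ?thesis .
qed

lemma sum_row_weight_abs_deviation_le:
  assumes "J \<subseteq> {0..<p}" "J \<noteq> {}" "0 < q" "q < 1"
  shows "(\<Sum>r\<in>test_rows p. row_weight p q r * \<bar>real (card {j\<in>J. r j}) - real (card J) * q\<bar>)
    \<le> sqrt (real (card J) * (q * (1 - q)))"
proof -
  define s where "s = sqrt (real (card J) * (q * (1 - q)))"
  have fin: "finite J"
    using assms(1) finite_subset by blast
  then have s: "s > 0" "s\<^sup>2 = real (card J) * (q * (1 - q))"
    using assms by (auto simp: s_def card_gt_0_iff)
  have deviation: "real (card {j\<in>J. r j}) - real (card J) * q = (\<Sum>j\<in>J. of_bool (r j) - q)" for r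
    using fin by (simp add: sum_subtractf of_bool_def sum.If_cases Int_def)
  have am_gm: "\<bar>z\<bar> \<le> z\<^sup>2 / (2 * s) + s / 2" for z :: real
  proof -
    have "2 * s * \<bar>z\<bar> \<le> z\<^sup>2 + s\<^sup>2"
      using sum_squares_bound[of "\<bar>z\<bar>" s] by (simp add: power2_eq_square algebra_simps)
    then show ?thesis
      using s by (simp add: field_simps power2_eq_square)
  qed
  have "(\<Sum>r\<in>test_rows p. row_weight p q r * \<bar>real (card {j\<in>J. r j}) - real (card J) * q\<bar>) \<le>
      (\<Sum>r\<in>test_rows p. row_weight p q r * ((\<Sum>j\<in>J. of_bool (r j) - q)\<^sup>2 / (2 * s) + s / 2))"
    unfolding deviation using assms by (intro sum_mono mult_left_mono am_gm row_weight_nonneg) auto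
  also have "\<dots> = (\<Sum>r\<in>test_rows p. row_weight p q r * (\<Sum>j\<in>J. of_bool (r j) - q)\<^sup>2) / (2 * s)
      + s / 2 * (\<Sum>r\<in>test_rows p. row_weight p q r)"
    by (simp add: algebra_simps sum_distrib_left sum_distrib_right sum.distrib sum_divide_distrib)
  also have "\<dots> = s\<^sup>2 / (2 * s) + s / 2"
    using s(2) by (simp add: sum_row_weight_centered_sq[OF assms(1)] sum_row_weight)
  also have "\<dots> = s"
    using s(1) by (simp add: power2_eq_square)
  finally show ?thesis
    by (simp add: s_def)
qed

lemma expected_outcome_deviation_le:
  assumes "b \<in> label_set d p cnt" "i < n" "t < d" "cnt t > 0" "0 < q" "q < 1"
  shows "(\<Sum>X\<in>test_mats n p. bern_weight n p q X * \<bar>real (outcomes d n p b X i t) - real (cnt t) * q\<bar>)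
    \<le> sqrt (real (cnt t) * (q * (1 - q)))"
proof -
  define J where "J = {j. j < p \<and> b j = t}"
  have card_J: "card J = cnt t"
    using assms(1,3) by (simp add: label_set_def J_def)
  then have "J \<noteq> {}"
    using assms(4) by auto
  have "outcomes d n p b X i t = card {j\<in>J. X i j}" for X
    using assms(2,3) by (simp add: outcomes_def J_def conj_assoc)
  then have "(\<Sum>X\<in>test_mats n p. bern_weight n p q X * \<bar>real (outcomes d n p b X i t) - real (cnt t) * q\<bar>)
      = (\<Sum>r\<in>test_rows p. row_weight p q r * \<bar>real (card {j\<in>J. r j}) - real (card J) * q\<bar>)"
    using sum_bern_weight_row[OF assms(2), where h = "\<lambda>r. \<bar>real (card {j\<in>J. r j}) - real (card J) * q\<bar>"]
    by (simp add: card_J)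
  also have "\<dots> \<le> sqrt (real (card J) * (q * (1 - q)))"
    using \<open>J \<noteq> {}\<close> assms(5,6) by (intro sum_row_weight_abs_deviation_le) (auto simp: J_def)
  finally show ?thesis
    by (simp add: card_J)
qed

section \<open>Summation bounds\<close>

lemma sum_le_geometric_if_inj:
  fixes x :: real
  assumes "0 \<le> x" "x < 1" "finite Z" "inj_on g Z" and le: "\<And>z. z \<in> Z \<Longrightarrow> f z \<le> x ^ g z"
  shows "(\<Sum>z\<in>Z. f z) \<le> 1 / (1 - x)"
proof -
  obtain M where M: "g ` Z \<subseteq> {..<M}"
    using assms(3) finite_nat_iff_bounded by blast
  have "(\<Sum>z\<in>Z. f z) \<le> (\<Sum>k\<in>g ` Z. x ^ k)"
    using assms(4) le by (simp add: sum.reindex sum_mono)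
  also have "\<dots> \<le> (\<Sum>k<M. x ^ k)"
    using M assms(1) by (intro sum_mono2) auto
  also have "\<dots> = (1 - x ^ M) / (1 - x)"
    using assms(2) by (simp add: sum_gp_strict)
  also have "\<dots> \<le> 1 / (1 - x)"
    using assms(1,2) by (intro divide_right_mono) auto
  finally show ?thesis .
qed

lemma sum_exp_abs_le_if_inj_floor:
  fixes \<kappa> \<mu> :: real
  assumes "\<kappa> > 0" "finite Z" "inj_on (\<lambda>z. \<lfloor>\<bar>real z - \<mu>\<bar>\<rfloor>) Z"
  shows "(\<Sum>z\<in>Z. exp (- \<kappa> * \<bar>real z - \<mu>\<bar>)) \<le> 1 + 1 / \<kappa>"
proof -
  define x where "x = exp (- \<kappa>)"
  have x: "0 \<le> x" "x < 1"
    using assms(1) by (auto simp: x_def)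
  have "(\<Sum>z\<in>Z. exp (- \<kappa> * \<bar>real z - \<mu>\<bar>)) \<le> 1 / (1 - x)"
  proof (rule sum_le_geometric_if_inj[OF x assms(2)])
    show "inj_on (\<lambda>z. nat \<lfloor>\<bar>real z - \<mu>\<bar>\<rfloor>) Z"
      using assms(3) by (simp add: inj_on_def eq_nat_nat_iff)
    fix z
    have "real (nat \<lfloor>\<bar>real z - \<mu>\<bar>\<rfloor>) \<le> \<bar>real z - \<mu>\<bar>"
      by simp
    then show "exp (- \<kappa> * \<bar>real z - \<mu>\<bar>) \<le> x ^ nat \<lfloor>\<bar>real z - \<mu>\<bar>\<rfloor>"
      using assms(1) by (simp add: x_def flip: exp_of_nat_mult)
  qed
  also have "1 / (1 - x) \<le> 1 + 1 / \<kappa>"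
  proof -
    have "exp (- \<kappa>) * (1 + \<kappa>) \<le> 1"
      using exp_ge_add_one_self[of \<kappa>] by (simp add: exp_minus field_simps)
    then show ?thesis
      using assms(1) x by (simp add: x_def field_simps)
  qed
  finally show ?thesis .
qed

lemma sum_exp_abs_le:
  fixes \<kappa> \<mu> :: real
  assumes "\<kappa> > 0"
  shows "(\<Sum>z\<in>{0..N::nat}. exp (- \<kappa> * \<bar>real z - \<mu>\<bar>)) \<le> 2 * (1 + 1 / \<kappa>)"
proof -
  define Z1 where "Z1 = {z\<in>{0..N}. real z \<le> \<mu>}"
  define Z2 where "Z2 = {z\<in>{0..N}. \<mu> < real z}"
  have "\<lfloor>\<bar>real z - \<mu>\<bar>\<rfloor> = \<lfloor>\<mu>\<rfloor> - int z" if "z \<in> Z1" for z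
    using that floor_diff_of_int[of \<mu> "int z"] by (simp add: Z1_def)
  then have "inj_on (\<lambda>z. \<lfloor>\<bar>real z - \<mu>\<bar>\<rfloor>) Z1"
    by (simp add: inj_on_def)
  then have below: "(\<Sum>z\<in>Z1. exp (- \<kappa> * \<bar>real z - \<mu>\<bar>)) \<le> 1 + 1 / \<kappa>"
    using assms by (intro sum_exp_abs_le_if_inj_floor) (auto simp: Z1_def)
  have "\<lfloor>\<bar>real z - \<mu>\<bar>\<rfloor> = int z + \<lfloor>- \<mu>\<rfloor>" if "z \<in> Z2" for z
    using that floor_add_int[of "- \<mu>" "int z"] by (simp add: Z2_def)
  then have "inj_on (\<lambda>z. \<lfloor>\<bar>real z - \<mu>\<bar>\<rfloor>) Z2"
    by (simp add: inj_on_def)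
  then have above: "(\<Sum>z\<in>Z2. exp (- \<kappa> * \<bar>real z - \<mu>\<bar>)) \<le> 1 + 1 / \<kappa>"
    using assms by (intro sum_exp_abs_le_if_inj_floor) (auto simp: Z2_def)
  have "(\<Sum>z\<in>{0..N}. exp (- \<kappa> * \<bar>real z - \<mu>\<bar>)) =
      (\<Sum>z\<in>Z1. exp (- \<kappa> * \<bar>real z - \<mu>\<bar>)) + (\<Sum>z\<in>Z2. exp (- \<kappa> * \<bar>real z - \<mu>\<bar>))"
    unfolding Z1_def Z2_def by (subst sum.union_disjoint[symmetric]) (auto intro: sum.cong)
  then show ?thesis
    using below above by simp
qed

lemma sum_PiE_prod_exp_abs_le:
  fixes \<kappa> \<mu> :: "'a \<Rightarrow> real"
  assumes "finite I" "\<And>i. i \<in> I \<Longrightarrow> \<kappa> i > 0"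
  shows "(\<Sum>y\<in>I \<rightarrow>\<^sub>E {0..N::nat}. \<Prod>i\<in>I. exp (- \<kappa> i * \<bar>real (y i) - \<mu> i\<bar>)) \<le> (\<Prod>i\<in>I. 2 * (1 + 1 / \<kappa> i))"
proof -
  have "(\<Sum>y\<in>I \<rightarrow>\<^sub>E {0..N}. \<Prod>i\<in>I. exp (- \<kappa> i * \<bar>real (y i) - \<mu> i\<bar>)) =
      (\<Prod>i\<in>I. \<Sum>z\<in>{0..N}. exp (- \<kappa> i * \<bar>real z - \<mu> i\<bar>))"
    using assms(1) by (simp add: prod_sum_PiE)
  also have "\<dots> \<le> (\<Prod>i\<in>I. 2 * (1 + 1 / \<kappa> i))"
    using assms(2) by (intro prod_mono conjI sum_nonneg sum_exp_abs_le) auto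
  finally show ?thesis .
qed

lemma sum_le_card_mult_sum_if_inj:
  fixes W :: "'c \<Rightarrow> real"
  assumes "inj_on \<phi> S" "\<phi> ` S \<subseteq> C \<times> Y" "finite C" "finite Y" "\<And>y. y \<in> Y \<Longrightarrow> W y \<ge> 0"
  shows "(\<Sum>b\<in>S. W (snd (\<phi> b))) \<le> real (card C) * (\<Sum>y\<in>Y. W y)"
proof -
  have "(\<Sum>b\<in>S. W (snd (\<phi> b))) = (\<Sum>z\<in>\<phi> ` S. W (snd z))"
    using assms(1) by (simp add: sum.reindex)
  also have "\<dots> \<le> (\<Sum>z\<in>C \<times> Y. W (snd z))"
    using assms(2-5) by (intro sum_mono2) auto
  also have "\<dots> = real (card C) * (\<Sum>y\<in>Y. W y)"
    using sum.cartesian_product[of "\<lambda>c y. W y" Y C] by (simp add: case_prod_unfold)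
  finally show ?thesis .
qed

section \<open>The counting bound for fixed parameters\<close>

lemma success_mass_ge:
  assumes "error_prob d n p cnt q dec \<le> \<delta>"
  shows "(1 - \<delta>) * real (card (label_set d p cnt)) \<le>
    (\<Sum>b\<in>label_set d p cnt. \<Sum>X\<in>test_mats n p.
       bern_weight n p q X * of_bool (\<forall>j<p. dec X (outcomes d n p b X) j = b j))"
proof -
  define B where "B = label_set d p cnt"
  define err where "err = (\<Sum>b\<in>B. \<Sum>X\<in>test_mats n p.
    bern_weight n p q X * (if \<exists>j<p. dec X (outcomes d n p b X) j \<noteq> b j then 1 else 0))"
  have "(\<Sum>b\<in>B. \<Sum>X\<in>test_mats n p. bern_weight n p q X * of_bool (\<forall>j<p. dec X (outcomes d n p b X) j = b j))
      = (\<Sum>b\<in>B. \<Sum>X\<in>test_mats n p. bern_weight n p q X) - err"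
  proof -
    have "bern_weight n p q X * of_bool (\<forall>j<p. dec X (outcomes d n p b X) j = b j) = bern_weight n p q X
        - bern_weight n p q X * (if \<exists>j<p. dec X (outcomes d n p b X) j \<noteq> b j then 1 else 0)" for b X
      by auto
    then show ?thesis
      by (simp add: err_def sum_subtractf)
  qed
  also have "\<dots> = real (card B) - err"
    by (simp add: sum_bern_weight)
  finally have eq: "(\<Sum>b\<in>B. \<Sum>X\<in>test_mats n p. bern_weight n p q X * of_bool (\<forall>j<p. dec X (outcomes d n p b X) j = b j))
      = real (card B) - err" .
  have "err \<le> \<delta> * real (card B)"
  proof (cases "card B = 0")
    case True
    then show ?thesis
      using finite_label_set by (simp add: err_def B_def)
  next
    case False
    then show ?thesis
      using assms by (simp add: error_prob_def err_def B_def field_simps)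
  qed
  then show ?thesis
    unfolding B_def[symmetric] using eq by (simp add: left_diff_distrib)
qed

definition outcomes_on :: "nat \<Rightarrow> nat \<Rightarrow> nat \<Rightarrow> nat set \<Rightarrow> (nat \<Rightarrow> nat) \<Rightarrow> (nat \<Rightarrow> nat \<Rightarrow> bool) \<Rightarrow> nat \<times> nat \<Rightarrow> nat" where
  "outcomes_on d n p F b X = restrict (\<lambda>(i, t). outcomes d n p b X i t) ({0..<n} \<times> F)"

lemma outcomes_eq_if_merge_labels_eq:
  assumes "F \<subseteq> {0..<d}" "g \<notin> F" "merge_labels F g p b1 = merge_labels F g p b2"
    and "\<And>i t. i < n \<Longrightarrow> t \<in> F \<Longrightarrow> outcomes d n p b1 X i t = outcomes d n p b2 X i t"
  shows "outcomes d n p b1 X = outcomes d n p b2 X"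
proof (intro ext)
  fix i t
  show "outcomes d n p b1 X i t = outcomes d n p b2 X i t"
  proof (cases "i < n")
    case True
    have on_F: "card {j. j < p \<and> b1 j = u \<and> X i j} = card {j. j < p \<and> b2 j = u \<and> X i j}"
      if "u \<in> F" for u
    proof -
      have "u < d"
        using assms(1) that by auto
      then show ?thesis
        using assms(4)[OF True that] True by (simp add: outcomes_def)
    qed
    have "finite F"
      using assms(1) finite_subset by blast
    then have "card {j. j < p \<and> b1 j = t \<and> X i j} = card {j. j < p \<and> b2 j = t \<and> X i j}"
      using assms(2,3) on_F by (rule label_count_eq_if_merge_labels_eq)
    then show ?thesis
      by (simp add: outcomes_def)
  qed (simp add: outcomes_def)
qed

lemma inj_on_merge_labels_outcomes_on:
  assumes "F \<subseteq> {0..<d}" "g \<notin> F"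
  shows "inj_on (\<lambda>b. (merge_labels F g p b, outcomes_on d n p F b X))
    {b \<in> label_set d p cnt. \<forall>j<p. dec X (outcomes d n p b X) j = b j}"
proof (rule inj_onI)
  fix b1 b2
  assume b1: "b1 \<in> {b \<in> label_set d p cnt. \<forall>j<p. dec X (outcomes d n p b X) j = b j}"
    and b2: "b2 \<in> {b \<in> label_set d p cnt. \<forall>j<p. dec X (outcomes d n p b X) j = b j}"
    and eq: "(merge_labels F g p b1, outcomes_on d n p F b1 X) = (merge_labels F g p b2, outcomes_on d n p F b2 X)"
  have "outcomes d n p b1 X i t = outcomes d n p b2 X i t" if "i < n" "t \<in> F" for i t
    using fun_cong[OF arg_cong[OF eq, of snd], of "(i, t)"] that by (simp add: outcomes_on_def)
  then have "outcomes d n p b1 X = outcomes d n p b2 X"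
    using assms eq by (intro outcomes_eq_if_merge_labels_eq[of F d g p b1 b2]) auto
  then have "\<forall>j\<in>{0..<p}. b1 j = b2 j"
    using b1 b2 by auto
  moreover have "b1 \<in> {0..<p} \<rightarrow>\<^sub>E {0..<d}" "b2 \<in> {0..<p} \<rightarrow>\<^sub>E {0..<d}"
    using b1 b2 by (auto simp: label_set_def)
  ultimately show "b1 = b2"
    using PiE_ext by blast
qed

lemma sum_decoded_weight_le:
  fixes W :: "(nat \<times> nat \<Rightarrow> nat) \<Rightarrow> real"
  assumes "F \<subseteq> {0..<d}" "g < d" "g \<notin> F" and W: "\<And>y. W y \<ge> 0"
  shows "(\<Sum>b\<in>label_set d p cnt. of_bool (\<forall>j<p. dec X (outcomes d n p b X) j = b j) * W (outcomes_on d n p F b X))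
    \<le> real (card (labelings p ({0..<d} - F) (cnt(g := \<Sum>u\<in>insert g F. cnt u))))
      * (\<Sum>y\<in>({0..<n} \<times> F) \<rightarrow>\<^sub>E {0..p}. W y)"
proof -
  define S where "S = {b \<in> label_set d p cnt. \<forall>j<p. dec X (outcomes d n p b X) j = b j}"
  have finF: "finite F"
    using assms(1) finite_subset by blast
  have outcomes_le: "outcomes d n p b X i t \<le> p" for b i t
  proof -
    have "card {j. j < p \<and> b j = t \<and> X i j} \<le> card {..<p}"
      by (intro card_mono) auto
    then show ?thesis
      by (simp add: outcomes_def)
  qed
  have "(\<Sum>b\<in>label_set d p cnt. of_bool (\<forall>j<p. dec X (outcomes d n p b X) j = b j) * W (outcomes_on d n p F b X))
      = (\<Sum>b\<in>S. W (snd (merge_labels F g p b, outcomes_on d n p F b X)))"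
    using finite_label_set[of d p cnt] by (simp add: S_def sum.inter_filter sum.inter_restrict if_distrib[where f = "\<lambda>x. x * _"] cong: if_cong)
  also have "\<dots> \<le> real (card (labelings p ({0..<d} - F) (cnt(g := \<Sum>u\<in>insert g F. cnt u))))
      * (\<Sum>y\<in>({0..<n} \<times> F) \<rightarrow>\<^sub>E {0..p}. W y)"
  proof (rule sum_le_card_mult_sum_if_inj)
    show "inj_on (\<lambda>b. (merge_labels F g p b, outcomes_on d n p F b X)) S"
      unfolding S_def using assms(1,3) by (rule inj_on_merge_labels_outcomes_on)
    show "(\<lambda>b. (merge_labels F g p b, outcomes_on d n p F b X)) ` S \<subseteq>
        labelings p ({0..<d} - F) (cnt(g := \<Sum>u\<in>insert g F. cnt u)) \<times> (({0..<n} \<times> F) \<rightarrow>\<^sub>E {0..p})"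
    proof (rule image_subsetI)
      fix b assume "b \<in> S"
      then have "merge_labels F g p b \<in> labelings p ({0..<d} - F) (cnt(g := \<Sum>u\<in>insert g F. cnt u))"
        using assms(1-3) finF by (intro merge_labels_in_labelings) (auto simp: S_def label_set_eq_labelings)
      moreover have "outcomes_on d n p F b X \<in> ({0..<n} \<times> F) \<rightarrow>\<^sub>E {0..p}"
        using outcomes_le by (auto simp: outcomes_on_def)
      ultimately show "(merge_labels F g p b, outcomes_on d n p F b X) \<in>
          labelings p ({0..<d} - F) (cnt(g := \<Sum>u\<in>insert g F. cnt u)) \<times> (({0..<n} \<times> F) \<rightarrow>\<^sub>E {0..p})"
        by simp
    qed
  qed (use finF W in \<open>auto intro: finite_labelings finite_PiE\<close>)
  finally show ?thesis .
qed

definition deviation_score :: "('i \<times> 't) set \<Rightarrow> ('t \<Rightarrow> real) \<Rightarrow> ('t \<Rightarrow> real) \<Rightarrow> ('i \<times> 't \<Rightarrow> nat) \<Rightarrow> real" where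
  "deviation_score I \<mu> s y = (\<Sum>it\<in>I. \<bar>real (y it) - \<mu> (snd it)\<bar> / s (snd it))"

lemma deviation_score_nonneg:
  "(\<And>it. it \<in> I \<Longrightarrow> s (snd it) > 0) \<Longrightarrow> deviation_score I \<mu> s y \<ge> 0"
  unfolding deviation_score_def by (intro sum_nonneg) (simp add: less_imp_le)

lemma sum_exp_neg_deviation_score_le:
  assumes "finite F" "\<And>t. t \<in> F \<Longrightarrow> s t > 0"
  shows "(\<Sum>y\<in>({0..<n} \<times> F) \<rightarrow>\<^sub>E {0..N}. exp (- deviation_score ({0..<n} \<times> F) \<mu> s y))
    \<le> (\<Prod>t\<in>F. (2 * (1 + s t)) ^ n)"
proof -
  have "exp (- deviation_score ({0..<n} \<times> F) \<mu> s y) =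
      (\<Prod>it\<in>{0..<n} \<times> F. exp (- (1 / s (snd it)) * \<bar>real (y it) - \<mu> (snd it)\<bar>))" for y
    using assms(1) by (simp add: deviation_score_def exp_sum flip: sum_negf)
  then have "(\<Sum>y\<in>({0..<n} \<times> F) \<rightarrow>\<^sub>E {0..N}. exp (- deviation_score ({0..<n} \<times> F) \<mu> s y))
      \<le> (\<Prod>it\<in>{0..<n} \<times> F. 2 * (1 + 1 / (1 / s (snd it))))"
    using assms by (simp only:) (intro sum_PiE_prod_exp_abs_le, auto)
  also have "\<dots> = (\<Prod>i\<in>{0..<n}. \<Prod>t\<in>F. 2 * (1 + s t))"
    using prod.cartesian_product[of "\<lambda>i t. 2 * (1 + s t)" F "{0..<n}"] by (simp add: case_prod_unfold)
  also have "\<dots> = (\<Prod>t\<in>F. (2 * (1 + s t)) ^ n)"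
    by (simp add: prod_power_distrib)
  finally show ?thesis .
qed

lemma expected_deviation_score_le:
  assumes "b \<in> label_set d p cnt" "F \<subseteq> {0..<d}" "\<And>t. t \<in> F \<Longrightarrow> cnt t > 0" "0 < q" "q < 1"
  shows "(\<Sum>X\<in>test_mats n p. bern_weight n p q X * deviation_score ({0..<n} \<times> F) (\<lambda>t. real (cnt t) * q)
      (\<lambda>t. sqrt (real (cnt t) * (q * (1 - q)))) (outcomes_on d n p F b X)) \<le> real (n * card F)"
proof -
  define s where "s = (\<lambda>t. sqrt (real (cnt t) * (q * (1 - q))))"
  have "(\<Sum>X\<in>test_mats n p. bern_weight n p q X * deviation_score ({0..<n} \<times> F) (\<lambda>t. real (cnt t) * q) s (outcomes_on d n p F b X))
      = (\<Sum>it\<in>{0..<n} \<times> F. (\<Sum>X\<in>test_mats n p. bern_weight n p q X *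
          \<bar>real (outcomes d n p b X (fst it) (snd it)) - real (cnt (snd it)) * q\<bar>) / s (snd it))"
    by (simp add: deviation_score_def outcomes_on_def sum_distrib_left sum_divide_distrib case_prod_unfold
        sum.swap[of _ "test_mats n p"])
  also have "\<dots> \<le> (\<Sum>it\<in>{0..<n} \<times> F. 1)"
  proof (intro sum_mono)
    fix it assume it: "it \<in> {0..<n} \<times> F"
    then have "s (snd it) > 0"
      using assms(3-5) by (auto simp: s_def)
    moreover have "(\<Sum>X\<in>test_mats n p. bern_weight n p q X *
        \<bar>real (outcomes d n p b X (fst it) (snd it)) - real (cnt (snd it)) * q\<bar>) \<le> s (snd it)"
      using it assms unfolding s_def by (intro expected_outcome_deviation_le) auto
    ultimately show "(\<Sum>X\<in>test_mats n p. bern_weight n p q X *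
        \<bar>real (outcomes d n p b X (fst it) (snd it)) - real (cnt (snd it)) * q\<bar>) / s (snd it) \<le> 1"
      by simp
  qed
  also have "\<dots> = real (n * card F)"
    by (simp add: card_cartesian_product)
  finally show ?thesis
    by (simp add: s_def)
qed

lemma one_le_exp_plus_markov:
  fixes T K m :: real
  assumes "T \<ge> 0" "K > 0" "m \<ge> 0" "m = 0 \<Longrightarrow> T = 0"
  shows "1 \<le> exp (K * m) * exp (- T) + T / (K * m)"
proof (cases "T \<le> K * m")
  case True
  then have "1 \<le> exp (K * m) * exp (- T)"
    by (simp add: exp_minus field_simps)
  moreover have "0 \<le> T / (K * m)"
    using assms by simp
  ultimately show ?thesis
    by linarith
next
  case False
  then have "1 \<le> T / (K * m)"
    using assms by (cases "m = 0") auto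
  then show ?thesis
    by (intro add_increasing) auto
qed

text \<open>Weighting each correctly decoded labeling by \<open>exp (- score)\<close> makes these labelings
  countable through their merged labelings and observed counts, while labelings with a large
  deviation score are rare by Markov's inequality.\<close>

lemma success_count_bound:
  fixes dec :: "(nat \<Rightarrow> nat \<Rightarrow> bool) \<Rightarrow> (nat \<Rightarrow> nat \<Rightarrow> nat) \<Rightarrow> nat \<Rightarrow> nat"
  assumes F: "F \<subseteq> {0..<d}" "g < d" "g \<notin> F" and q: "0 < q" "q < 1"
    and cnt_pos: "\<And>t. t \<in> F \<Longrightarrow> cnt t > 0"
    and err: "error_prob d n p cnt q dec \<le> \<delta>" and K: "K > 0"
  shows "(1 - \<delta> - 1 / K) * real (card (label_set d p cnt)) \<le>
    exp (K * real (n * card F)) * (\<Prod>t\<in>F. (2 * (1 + sqrt (real (cnt t) * (q * (1 - q))))) ^ n) *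
    real (card (labelings p ({0..<d} - F) (cnt(g := \<Sum>u\<in>insert g F. cnt u))))"
proof -
  define B where "B = label_set d p cnt"
  define C where "C = real (card (labelings p ({0..<d} - F) (cnt(g := \<Sum>u\<in>insert g F. cnt u))))"
  define w where "w = bern_weight n p q"
  define decodes where "decodes = (\<lambda>b X. \<forall>j<p. dec X (outcomes d n p b X) j = b j)"
  define s where "s = (\<lambda>t. sqrt (real (cnt t) * (q * (1 - q))))"
  define score where "score = deviation_score ({0..<n} \<times> F) (\<lambda>t. real (cnt t) * q) s"
  define m where "m = real (n * card F)"
  define P where "P = (\<Prod>t\<in>F. (2 * (1 + s t)) ^ n)"
  have finF: "finite F"
    using F(1) finite_subset by blast
  have s_pos: "s t > 0" if "t \<in> F" for t
    using cnt_pos[OF that] q by (simp add: s_def)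
  have w_nonneg: "w X \<ge> 0" for X
    using q by (simp add: w_def bern_weight_nonneg)
  have markov: "of_bool (decodes b X) \<le>
      exp (K * m) * (of_bool (decodes b X) * exp (- score y)) + score y / (K * m)" for b X y
  proof -
    have "score y \<ge> 0"
      unfolding score_def using s_pos by (intro deviation_score_nonneg) auto
    moreover have "score y = 0" if "m = 0"
      using that finF by (auto simp: score_def deviation_score_def m_def)
    ultimately show ?thesis
      using one_le_exp_plus_markov[of "score y" K m] K by (auto simp: m_def)
  qed
  have decoded: "(\<Sum>b\<in>B. of_bool (decodes b X) * exp (- score (outcomes_on d n p F b X))) \<le> C * P" for X
  proof -
    have "(\<Sum>b\<in>B. of_bool (decodes b X) * exp (- score (outcomes_on d n p F b X)))
        \<le> C * (\<Sum>y\<in>({0..<n} \<times> F) \<rightarrow>\<^sub>E {0..p}. exp (- score y))"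
      unfolding B_def C_def decodes_def by (rule sum_decoded_weight_le[OF F]) simp
    also have "\<dots> \<le> C * P"
      unfolding score_def P_def C_def using finF s_pos
      by (intro mult_left_mono sum_exp_neg_deviation_score_le) auto
    finally show ?thesis .
  qed
  have "(1 - \<delta>) * real (card B) \<le> (\<Sum>b\<in>B. \<Sum>X\<in>test_mats n p. w X * of_bool (decodes b X))"
    using success_mass_ge[OF err] by (simp add: B_def w_def decodes_def)
  also have "\<dots> \<le> (\<Sum>b\<in>B. \<Sum>X\<in>test_mats n p. w X * (exp (K * m) * (of_bool (decodes b X) *
      exp (- score (outcomes_on d n p F b X))) + score (outcomes_on d n p F b X) / (K * m)))"
    by (intro sum_mono mult_left_mono markov w_nonneg)
  also have "\<dots> = exp (K * m) * (\<Sum>X\<in>test_mats n p. w X * (\<Sum>b\<in>B. of_bool (decodes b X) *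
      exp (- score (outcomes_on d n p F b X)))) + (\<Sum>b\<in>B. \<Sum>X\<in>test_mats n p. w X * score (outcomes_on d n p F b X)) / (K * m)"
    by (simp add: algebra_simps sum.distrib sum_distrib_left sum_divide_distrib sum.swap[of _ B])
  also have "\<dots> \<le> exp (K * m) * (\<Sum>X\<in>test_mats n p. w X * (C * P)) + (\<Sum>b\<in>B. m) / (K * m)"
    using K F(1) cnt_pos q unfolding w_def score_def s_def m_def B_def
    by (intro add_mono mult_left_mono divide_right_mono sum_mono decoded[unfolded B_def w_def score_def s_def]
        expected_deviation_score_le bern_weight_nonneg) auto
  also have "\<dots> \<le> exp (K * m) * (C * P) + real (card B) / K"
    using K by (simp add: w_def sum_bern_weight m_def flip: sum_distrib_right)
  finally show ?thesis
    by (simp add: B_def C_def P_def s_def m_def algebra_simps)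
qed

lemma card_label_set_eq_multinomial:
  assumes F: "F \<subseteq> {0..<d}" "g < d" "g \<notin> F" and cnt_sum: "(\<Sum>t<d. cnt t) = p"
  defines "N \<equiv> \<Sum>u\<in>insert g F. cnt u"
  shows "real (card (label_set d p cnt)) =
      fact N / (\<Prod>u\<in>insert g F. fact (cnt u)) * real (card (labelings p ({0..<d} - F) (cnt(g := N))))"
    and "card (labelings p ({0..<d} - F) (cnt(g := N))) > 0"
proof -
  define B where "B = card (label_set d p cnt)"
  define C where "C = card (labelings p ({0..<d} - F) (cnt(g := N)))"
  have nat_eq: "B * (\<Prod>u\<in>insert g F. fact (cnt u)) = C * fact N"
    unfolding B_def C_def N_def label_set_eq_labelings
    using F cnt_sum by (intro card_labelings_merge) (auto simp: atLeast0LessThan)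
  have "real B * (\<Prod>u\<in>insert g F. fact (cnt u)) = real C * fact N"
    using arg_cong[where f = real, OF nat_eq] by (simp add: of_nat_prod)
  then show "real B = fact N / (\<Prod>u\<in>insert g F. fact (cnt u)) * real C"
    using prod_pos[of "insert g F" "\<lambda>u. fact (cnt u) :: real"] by (simp add: eq_divide_eq)
  have "B * (\<Prod>t\<in>{0..<d}. fact (cnt t)) = fact p"
    unfolding B_def label_set_eq_labelings using cnt_sum by (intro card_labelings) (auto simp: atLeast0LessThan)
  then have "B > 0"
    by (cases "B = 0") auto
  then have "C * fact N > 0"
    unfolding nat_eq[symmetric] by (simp add: prod_pos)
  then show "C > 0"
    by simp
qed

lemma ln_deviation_factor_le:
  fixes q :: real
  assumes "c \<le> p" "0 \<le> q" "q \<le> 1" "1 \<le> real p * q * (1 - q)"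
  shows "ln (2 * (1 + sqrt (real c * (q * (1 - q))))) \<le> ln 4 + ln (real p * q * (1 - q)) / 2"
proof -
  define V where "V = real p * q * (1 - q)"
  have "0 \<le> sqrt (real c * (q * (1 - q)))"
    using assms(2,3) by simp
  have "sqrt (real c * (q * (1 - q))) \<le> sqrt V"
    using assms by (auto simp: V_def mult.assoc intro!: mult_right_mono)
  moreover have "1 \<le> sqrt V"
    using assms(4) by (simp add: V_def)
  ultimately have "2 * (1 + sqrt (real c * (q * (1 - q)))) \<le> 4 * sqrt V"
    by argo
  moreover have "0 < 2 * (1 + sqrt (real c * (q * (1 - q))))"
    using \<open>0 \<le> sqrt (real c * (q * (1 - q)))\<close> by argo
  ultimately have "ln (2 * (1 + sqrt (real c * (q * (1 - q))))) \<le> ln (4 * sqrt V)"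
    by (rule ln_mono)
  also have "\<dots> = ln 4 + ln V / 2"
    using \<open>1 \<le> sqrt V\<close> by (simp add: ln_mult ln_sqrt)
  finally show ?thesis
    by (simp add: V_def)
qed

lemma ln_multinomial_le_tests:
  fixes dec :: "(nat \<Rightarrow> nat \<Rightarrow> bool) \<Rightarrow> (nat \<Rightarrow> nat \<Rightarrow> nat) \<Rightarrow> nat \<Rightarrow> nat"
  assumes F: "F \<subseteq> {0..<d}" "g < d" "g \<notin> F"
    and cnt_sum: "(\<Sum>t<d. cnt t) = p" and cnt_pos: "\<And>t. t \<in> F \<Longrightarrow> cnt t > 0"
    and q: "0 < q" "q < 1" and V: "1 \<le> real p * q * (1 - q)"
    and err: "error_prob d n p cnt q dec \<le> \<delta>" and \<delta>: "\<delta> < 1"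
  defines "N \<equiv> \<Sum>u\<in>insert g F. cnt u"
  shows "ln (fact N / (\<Prod>u\<in>insert g F. fact (cnt u))) + ln ((1 - \<delta>) / 2)
    \<le> real n * real (card F) * (ln (real p * q * (1 - q)) / 2 + (2 / (1 - \<delta>) + ln 4))"
proof -
  define K where "K = 2 / (1 - \<delta>)"
  define s where "s = (\<lambda>t. sqrt (real (cnt t) * (q * (1 - q))))"
  define P where "P = (\<Prod>t\<in>F. (2 * (1 + s t)) ^ n)"
  define M where "M = fact N / (\<Prod>u\<in>insert g F. fact (cnt u) :: real)"
  define C where "C = real (card (labelings p ({0..<d} - F) (cnt(g := N))))"
  have K: "K > 0" "1 - \<delta> - 1 / K = (1 - \<delta>) / 2"
    using \<delta> by (auto simp: K_def field_simps)
  have finF: "finite F"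
    using F(1) finite_subset by blast
  have factor_pos: "2 * (1 + s t) > 0" for t
    using q by (simp add: s_def add_pos_nonneg)
  have "C > 0"
    using card_label_set_eq_multinomial(2)[OF F cnt_sum] by (simp add: C_def N_def)
  moreover have "(1 - \<delta>) / 2 * M * C \<le> exp (K * real (n * card F)) * P * C"
    using success_count_bound[OF F q cnt_pos err K(1)] card_label_set_eq_multinomial(1)[OF F cnt_sum]
    unfolding K(2) C_def M_def P_def s_def N_def by (simp only: mult.assoc)
  ultimately have bound: "(1 - \<delta>) / 2 * M \<le> exp (K * real (n * card F)) * P"
    by (rule mult_right_le_imp_le[rotated])
  have ln_factor_le: "ln (2 * (1 + s t)) \<le> ln 4 + ln (real p * q * (1 - q)) / 2" if "t \<in> F" for t
    unfolding s_def using q V F(1) that cnt_sum member_le_sum[of t "{..<d}" cnt]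
    by (intro ln_deviation_factor_le) auto
  have "M > 0"
    by (simp add: M_def prod_pos)
  have "ln M + ln ((1 - \<delta>) / 2) = ln ((1 - \<delta>) / 2 * M)"
    using \<delta> \<open>M > 0\<close> by (subst ln_mult) auto
  also have "\<dots> \<le> ln (exp (K * real (n * card F)) * P)"
    using bound \<delta> \<open>M > 0\<close> by (intro ln_mono) auto
  also have "\<dots> = K * real (n * card F) + (\<Sum>t\<in>F. ln ((2 * (1 + s t)) ^ n))"
    unfolding P_def using finF factor_pos
    by (simp add: ln_mult prod_pos ln_prod less_imp_neq[symmetric])
  also have "\<dots> = K * real (n * card F) + real n * (\<Sum>t\<in>F. ln (2 * (1 + s t)))"
    using factor_pos by (simp add: ln_realpow sum_distrib_left)
  also have "\<dots> \<le> K * real (n * card F) + real n * (\<Sum>t\<in>F. ln 4 + ln (real p * q * (1 - q)) / 2)"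
    using ln_factor_le by (intro add_left_mono mult_left_mono sum_mono) auto
  also have "\<dots> = real n * real (card F) * (ln (real p * q * (1 - q)) / 2 + (2 / (1 - \<delta>) + ln 4))"
    by (simp add: K_def algebra_simps)
  finally show ?thesis
    by (simp add: M_def)
qed

lemma multinomial_entropy_le_tests:
  fixes dec :: "(nat \<Rightarrow> nat \<Rightarrow> bool) \<Rightarrow> (nat \<Rightarrow> nat \<Rightarrow> nat) \<Rightarrow> nat \<Rightarrow> nat"
  assumes G: "G \<subseteq> {0..<d}" "g \<in> G" and cnt_sum: "(\<Sum>t<d. cnt t) = p"
    and cnt_ge: "\<And>t. t \<in> G \<Longrightarrow> cnt t \<ge> 1"
    and q: "0 < q" "q < 1" and V: "1 \<le> real p * q * (1 - q)"
    and err: "error_prob d n p cnt q dec \<le> \<delta>" and \<delta>: "\<delta> < 1"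
  shows "real (\<Sum>t\<in>G. cnt t) * ln (real (\<Sum>t\<in>G. cnt t)) - (\<Sum>t\<in>G. real (cnt t) * ln (real (cnt t)))
      - (\<Sum>t\<in>G. 1 + ln (real (cnt t))) + ln ((1 - \<delta>) / 2)
    \<le> real (card G - 1) / 2 * real n * (ln (real p * q * (1 - q)) + 2 * (2 / (1 - \<delta>) + ln 4))"
proof -
  define F where "F = G - {g}"
  have finG: "finite G"
    using G(1) finite_subset by blast
  have F: "F \<subseteq> {0..<d}" "g < d" "g \<notin> F" "insert g F = G" "card F = card G - 1"
    using G finG by (auto simp: F_def)
  have "real (\<Sum>t\<in>G. cnt t) * ln (real (\<Sum>t\<in>G. cnt t)) - (\<Sum>t\<in>G. real (cnt t) * ln (real (cnt t)))
      - (\<Sum>t\<in>G. 1 + ln (real (cnt t))) + ln ((1 - \<delta>) / 2)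
      \<le> ln (fact (\<Sum>t\<in>G. cnt t) / (\<Prod>t\<in>G. fact (cnt t))) + ln ((1 - \<delta>) / 2)"
    using ln_multinomial_ge[OF finG cnt_ge] by simp
  also have "\<dots> \<le> real n * real (card F) * (ln (real p * q * (1 - q)) / 2 + (2 / (1 - \<delta>) + ln 4))"
    unfolding F(4)[symmetric] using F(1-4) q V err cnt_sum \<delta> cnt_ge
    by (intro ln_multinomial_le_tests) (auto simp: Suc_le_eq)
  also have "\<dots> = real (card G - 1) / 2 * real n * (ln (real p * q * (1 - q)) + 2 * (2 / (1 - \<delta>) + ln 4))"
    using \<delta> F(5) by (simp add: field_simps)
  finally show ?thesis .
qed

section \<open>Entropy lost by merging classes\<close>

definition merge_entropy_loss :: "('a \<Rightarrow> real) \<Rightarrow> 'a set \<Rightarrow> real" where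
  "merge_entropy_loss \<pi> G = (\<Sum>t\<in>G. \<pi> t) * ln (\<Sum>t\<in>G. \<pi> t) - (\<Sum>t\<in>G. \<pi> t * ln (\<pi> t))"

lemma merge_entropy_loss_pos:
  assumes "finite G" "card G \<ge> 2" "\<And>t. t \<in> G \<Longrightarrow> \<pi> t > 0"
  shows "merge_entropy_loss \<pi> G > 0"
proof -
  have less: "\<pi> t < (\<Sum>u\<in>G. \<pi> u)" if t: "t \<in> G" for t
  proof -
    have "card (G - {t}) \<ge> 1"
      using assms(1,2) t by (simp add: card_Diff_singleton)
    then obtain v where "v \<in> G" "v \<noteq> t"
      by (metis Diff_iff card.empty ex_in_conv insertI1 not_one_le_zero)
    then have "(\<Sum>u\<in>G - {t}. \<pi> u) > 0"
      using assms(1,3) by (intro sum_pos2[of _ v]) (auto intro: less_imp_le)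
    then show ?thesis
      using assms(1) t by (simp add: sum.remove)
  qed
  have "\<pi> t * ln (\<pi> t) < \<pi> t * ln (\<Sum>u\<in>G. \<pi> u)" if "t \<in> G" for t
  proof -
    have "0 < \<pi> t" "\<pi> t < (\<Sum>u\<in>G. \<pi> u)"
      using assms(3) less that by auto
    then show ?thesis
      by simp
  qed
  moreover obtain t0 where "t0 \<in> G"
    using assms(2) by fastforce
  ultimately have "(\<Sum>t\<in>G. \<pi> t * ln (\<pi> t)) < (\<Sum>t\<in>G. \<pi> t * ln (\<Sum>u\<in>G. \<pi> u))"
    using assms(1) by (intro sum_strict_mono) auto
  then show ?thesis
    by (simp add: merge_entropy_loss_def sum_distrib_right)
qed

lemma sorted_desc_eq_map:
  "sorted_desc d \<pi> = map \<pi> (rev (sort_key \<pi> [0..<d]))"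
proof -
  have "sort (map \<pi> [0..<d]) = map \<pi> (sort_key \<pi> [0..<d])"
    by (rule properties_for_sort) (simp_all add: mset_map)
  then show ?thesis
    by (simp add: sorted_desc_def rev_map)
qed

lemma entropy_gap_pi_r:
  assumes "1 \<le> r" "r < d"
  obtains G where "G \<subseteq> {0..<d}" "card G = d - r + 1"
    "entropy_vec d \<pi> - entropy_list (pi_r d \<pi> r) = merge_entropy_loss \<pi> G"
proof -
  define I where "I = rev (sort_key \<pi> [0..<d])"
  define k where "k = d - r + 1"
  define h where "h = (\<lambda>x::real. x * ln x)"
  have I: "distinct I" "set I = {0..<d}" "length I = d" "mset I = mset [0..<d]"
    by (simp_all add: I_def)
  have pi_r: "pi_r d \<pi> r = sum_list (take k (map \<pi> I)) # drop k (map \<pi> I)"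
    by (simp only: pi_r_def sorted_desc_eq_map I_def k_def)
  have "sum_list (map (h \<circ> \<pi>) [0..<d]) = sum_list (map (h \<circ> \<pi>) I)"
    using I(4) by (metis mset_map sum_mset_sum_list)
  also have "\<dots> = sum_list (map (h \<circ> \<pi>) (take k I)) + sum_list (map (h \<circ> \<pi>) (drop k I))"
    by (metis append_take_drop_id map_append sum_list_append)
  finally have "entropy_vec d \<pi> - entropy_list (pi_r d \<pi> r) =
      h (sum_list (map \<pi> (take k I))) - sum_list (map (h \<circ> \<pi>) (take k I))"
    by (simp add: entropy_vec_def pi_r entropy_list_def h_def take_map drop_map comp_def)
  also have "\<dots> = merge_entropy_loss \<pi> (set (take k I))"
    using I(1) by (simp add: merge_entropy_loss_def h_def sum_list_distinct_conv_sum_set)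
  finally have gap: "entropy_vec d \<pi> - entropy_list (pi_r d \<pi> r) = merge_entropy_loss \<pi> (set (take k I))" .
  have "set (take k I) \<subseteq> {0..<d}"
    using I(2) set_take_subset by metis
  moreover have "card (set (take k I)) = d - r + 1"
    using I(1,3) assms by (simp add: distinct_card k_def)
  ultimately show ?thesis
    using gap by (rule that)
qed

lemma max_entropy_gap_eq_merge:
  assumes "d \<ge> 2"
  obtains G where "G \<subseteq> {0..<d}" "card G \<ge> 2"
    "(MAX r\<in>{1..d-1}. 2 * (entropy_vec d \<pi> - entropy_list (pi_r d \<pi> r)) / real (d - r))
      = 2 * merge_entropy_loss \<pi> G / real (card G - 1)"
proof -
  define f where "f = (\<lambda>r. 2 * (entropy_vec d \<pi> - entropy_list (pi_r d \<pi> r)) / real (d - r))"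
  have "(MAX r\<in>{1..d-1}. f r) \<in> f ` {1..d-1}"
    using assms by (intro Max_in) auto
  then obtain r where r: "r \<in> {1..d-1}" "(MAX r\<in>{1..d-1}. f r) = f r"
    by blast
  then have "1 \<le> r" "r < d"
    using assms by auto
  then obtain G where G: "G \<subseteq> {0..<d}" "card G = d - r + 1"
    and gap: "entropy_vec d \<pi> - entropy_list (pi_r d \<pi> r) = merge_entropy_loss \<pi> G"
    by (rule entropy_gap_pi_r)
  have "(MAX r\<in>{1..d-1}. f r) = 2 * merge_entropy_loss \<pi> G / real (card G - 1)"
    unfolding r(2) unfolding f_def gap using G(2) by simp
  moreover have "card G \<ge> 2"
    using G(2) \<open>r < d\<close> by simp
  ultimately show ?thesis
    using G(1) that unfolding f_def by blast
qed

section \<open>Asymptotics\<close>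

lemma tendsto_ratio_if_rounding:
  fixes c :: "nat \<Rightarrow> nat"
  assumes "\<And>p. \<bar>real (c p) - real p * a\<bar> \<le> 1"
  shows "(\<lambda>p. real (c p) / real p) \<longlonglongrightarrow> a"
proof -
  have "(\<lambda>p. real (c p) / real p - a) \<longlonglongrightarrow> 0"
  proof (rule Lim_null_comparison)
    show "\<forall>\<^sub>F p in sequentially. norm (real (c p) / real p - a) \<le> 1 / real p"
      using eventually_gt_at_top[of "0::nat"]
    proof eventually_elim
      case (elim p)
      then have "real (c p) / real p - a = (real (c p) - real p * a) / real p"
        by (simp add: field_simps)
      then show ?case
        using assms[of p] by (simp add: abs_div divide_right_mono)
    qed
  qed (rule lim_const_over_n)
  then show ?thesis
    by (simp add: LIM_zero_iff)
qed

lemma eventually_cnt_ge_one: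
  assumes "finite G" "\<And>t. t \<in> G \<Longrightarrow> \<pi> t > 0"
    and "\<And>p t. t \<in> G \<Longrightarrow> \<bar>real (cnt p t) - real p * \<pi> t\<bar> \<le> 1"
  shows "\<forall>\<^sub>F p in sequentially. \<forall>t\<in>G. cnt p t \<ge> 1"
proof (rule eventually_ball_finite[OF assms(1)], rule ballI)
  fix t assume "t \<in> G"
  then have "\<forall>\<^sub>F p in sequentially. real (cnt p t) / real p > 0"
    using assms(2,3) by (intro order_tendstoD(1)[OF tendsto_ratio_if_rounding]) auto
  then show "\<forall>\<^sub>F p in sequentially. cnt p t \<ge> 1"
    by eventually_elim (auto simp: zero_less_divide_iff)
qed

lemma multinomial_entropy_expr_eq:
  fixes c :: "'a \<Rightarrow> nat"
  assumes "finite G" "G \<noteq> {}" "p > 0" and pos: "\<And>t. t \<in> G \<Longrightarrow> c t > 0"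
  defines "r \<equiv> \<lambda>t. real (c t) / real p"
  shows "(real (\<Sum>t\<in>G. c t) * ln (real (\<Sum>t\<in>G. c t)) - (\<Sum>t\<in>G. real (c t) * ln (real (c t)))
      - (\<Sum>t\<in>G. 1 + ln (real (c t)))) / real p =
    (\<Sum>t\<in>G. r t) * ln (\<Sum>t\<in>G. r t) - (\<Sum>t\<in>G. r t * ln (r t))
      - (\<Sum>t\<in>G. (1 + ln (r t)) * (1 / real p) + ln (real p) / real p)"
proof -
  define S where "S = (\<Sum>t\<in>G. r t)"
  have c: "real (c t) = real p * r t" for t
    using assms(3) by (simp add: r_def)
  have r_pos: "r t > 0" if "t \<in> G" for t
    using assms(3) pos[OF that] by (simp add: r_def)
  have ln_c: "ln (real (c t)) = ln (real p) + ln (r t)" if "t \<in> G" for t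
    unfolding c using assms(3) r_pos[OF that] by (simp add: ln_mult)
  have N: "real (\<Sum>t\<in>G. c t) = real p * S"
    by (simp add: S_def c sum_distrib_left)
  moreover have "S > 0"
    unfolding S_def using assms(1,2) r_pos by (intro sum_pos) auto
  ultimately have ln_N: "ln (real (\<Sum>t\<in>G. c t)) = ln (real p) + ln S"
    using assms(3) by (simp add: ln_mult)
  have "(\<Sum>t\<in>G. real (c t) * ln (real (c t))) = (\<Sum>t\<in>G. real p * r t * (ln (real p) + ln (r t)))"
  proof (rule sum.cong[OF refl])
    fix t assume "t \<in> G"
    show "real (c t) * ln (real (c t)) = real p * r t * (ln (real p) + ln (r t))"
      unfolding ln_c[OF \<open>t \<in> G\<close>] by (simp only: c)
  qed
  then have "real (\<Sum>t\<in>G. c t) * ln (real (\<Sum>t\<in>G. c t)) - (\<Sum>t\<in>G. real (c t) * ln (real (c t)))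
      = real p * (S * ln S - (\<Sum>t\<in>G. r t * ln (r t)))"
    unfolding ln_N unfolding N by (simp add: S_def algebra_simps sum.distrib sum_distrib_left sum_distrib_right)
  moreover have "(\<Sum>t\<in>G. 1 + ln (real (c t))) / real p =
      (\<Sum>t\<in>G. (1 + ln (r t)) * (1 / real p) + ln (real p) / real p)"
    using ln_c by (simp add: sum_divide_distrib add_divide_distrib algebra_simps)
  ultimately show ?thesis
    using assms(3) by (simp add: S_def diff_divide_distrib)
qed

lemma tendsto_multinomial_entropy:
  fixes c :: "nat \<Rightarrow> 'a \<Rightarrow> nat"
  assumes "finite G" "G \<noteq> {}" and pos: "\<And>t. t \<in> G \<Longrightarrow> \<pi> t > 0"
    and round: "\<And>p t. t \<in> G \<Longrightarrow> \<bar>real (c p t) - real p * \<pi> t\<bar> \<le> 1"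
  shows "(\<lambda>p. (real (\<Sum>t\<in>G. c p t) * ln (real (\<Sum>t\<in>G. c p t)) - (\<Sum>t\<in>G. real (c p t) * ln (real (c p t)))
      - (\<Sum>t\<in>G. 1 + ln (real (c p t)))) / real p) \<longlonglongrightarrow> merge_entropy_loss \<pi> G"
proof -
  define r where "r = (\<lambda>p t. real (c p t) / real p)"
  have r: "(\<lambda>p. r p t) \<longlonglongrightarrow> \<pi> t" if "t \<in> G" for t
    unfolding r_def using round that by (intro tendsto_ratio_if_rounding)
  have "(\<Sum>t\<in>G. \<pi> t) > 0"
    using assms by (intro sum_pos) auto
  then have "(\<lambda>p. (\<Sum>t\<in>G. r p t) * ln (\<Sum>t\<in>G. r p t) - (\<Sum>t\<in>G. r p t * ln (r p t))
      - (\<Sum>t\<in>G. (1 + ln (r p t)) * (1 / real p) + ln (real p) / real p))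
    \<longlonglongrightarrow> (\<Sum>t\<in>G. \<pi> t) * ln (\<Sum>t\<in>G. \<pi> t) - (\<Sum>t\<in>G. \<pi> t * ln (\<pi> t)) - (\<Sum>t\<in>G. (1 + ln (\<pi> t)) * 0 + 0)"
    using pos by (intro tendsto_intros r lim_const_over_n lim_ln_over_n) (auto dest: pos)
  moreover have "\<forall>\<^sub>F p in sequentially. \<forall>t\<in>G. r p t > 0"
    using assms(1) pos by (intro eventually_ball_finite ballI order_tendstoD(1)[OF r]) auto
  then have "\<forall>\<^sub>F p in sequentially. (\<Sum>t\<in>G. r p t) * ln (\<Sum>t\<in>G. r p t) - (\<Sum>t\<in>G. r p t * ln (r p t))
      - (\<Sum>t\<in>G. (1 + ln (r p t)) * (1 / real p) + ln (real p) / real p) =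
      (real (\<Sum>t\<in>G. c p t) * ln (real (\<Sum>t\<in>G. c p t)) - (\<Sum>t\<in>G. real (c p t) * ln (real (c p t)))
      - (\<Sum>t\<in>G. 1 + ln (real (c p t)))) / real p"
    using eventually_gt_at_top[of "0::nat"]
  proof eventually_elim
    case (elim p)
    then show ?case
      using multinomial_entropy_expr_eq[OF assms(1,2), of p "c p"] by (simp add: r_def zero_less_divide_iff)
  qed
  ultimately show ?thesis
    unfolding merge_entropy_loss_def by (simp add: Lim_transform_eventually)
qed

lemma filterlim_mult_one_minus_at_top:
  fixes q :: "nat \<Rightarrow> real"
  assumes "\<And>p. 0 \<le> q p \<and> q p \<le> 1"
    and "filterlim (\<lambda>p. real p * q p) at_top sequentially"
    and "filterlim (\<lambda>p. real p * (1 - q p)) at_top sequentially"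
  shows "filterlim (\<lambda>p. real p * q p * (1 - q p)) at_top sequentially"
  unfolding filterlim_at_top
proof
  fix Z :: real
  show "\<forall>\<^sub>F p in sequentially. Z \<le> real p * q p * (1 - q p)"
    using assms(2,3)[unfolded filterlim_at_top, rule_format, of "2 * Z"]
  proof eventually_elim
    case (elim p)
    have q: "0 \<le> q p" "q p \<le> 1"
      using assms(1) by auto
    show ?case
    proof (cases "q p \<le> 1 / 2")
      case True
      then have "real p * q p * (1 / 2) \<le> real p * q p * (1 - q p)"
        using q by (intro mult_left_mono) auto
      then show ?thesis
        using elim by linarith
    next
      case False
      then have "real p * (1 - q p) * (1 / 2) \<le> real p * (1 - q p) * q p"
        using q by (intro mult_left_mono) auto
      moreover have "real p * q p * (1 - q p) = real p * (1 - q p) * q p"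
        by (simp add: mult_ac)
      ultimately show ?thesis
        using elim by linarith
    qed
  qed
qed

lemma lower_bound_from_log_bound:
  fixes n :: "nat \<Rightarrow> nat" and L V :: "nat \<Rightarrow> real"
  assumes L: "(\<lambda>p. L p / real p) \<longlonglongrightarrow> D" and "D > 0" "a > 0" "c \<ge> 0"
    and V: "filterlim V at_top sequentially"
    and bound: "\<forall>\<^sub>F p in sequentially. L p \<le> a * real (n p) * (ln (V p) + c)"
  shows "\<exists>\<epsilon> :: nat \<Rightarrow> real. \<epsilon> \<longlonglongrightarrow> 0 \<and>
    (\<forall>\<^sub>F p in sequentially. real (n p) \<ge> real p / ln (V p) * (D / a) * (1 - \<epsilon> p))"
proof -
  define \<epsilon> where "\<epsilon> = (\<lambda>p. 1 - L p / (real p * D) * (ln (V p) / (ln (V p) + c)))"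
  have lnV: "filterlim (\<lambda>p. ln (V p)) at_top sequentially"
    using ln_at_top V by (rule filterlim_compose)
  have "(\<lambda>p. L p / (real p * D)) \<longlonglongrightarrow> D / D"
    using tendsto_divide[OF L tendsto_const[of D]] \<open>D > 0\<close> by (simp add: mult.commute)
  moreover have "(\<lambda>p. 1 / (1 + c * (1 / ln (V p)))) \<longlonglongrightarrow> 1 / (1 + c * 0)"
    by (intro tendsto_intros tendsto_divide_0[OF tendsto_const] lnV filterlim_at_top_imp_at_infinity) auto
  moreover have "\<forall>\<^sub>F p in sequentially. 1 / (1 + c * (1 / ln (V p))) = ln (V p) / (ln (V p) + c)"
    using lnV[unfolded filterlim_at_top_dense, rule_format, of 0]
  proof eventually_elim
    case (elim p)
    then show ?case
      using \<open>c \<ge> 0\<close> by (simp add: field_simps)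
  qed
  ultimately have "\<epsilon> \<longlonglongrightarrow> 1 - 1 * 1"
    unfolding \<epsilon>_def using \<open>D > 0\<close> by (intro tendsto_intros) (auto simp: tendsto_cong)
  moreover have "\<forall>\<^sub>F p in sequentially. real (n p) \<ge> real p / ln (V p) * (D / a) * (1 - \<epsilon> p)"
    using bound eventually_gt_at_top[of "0::nat"] lnV[unfolded filterlim_at_top_dense, rule_format, of 0]
  proof eventually_elim
    case (elim p)
    have "real p / ln (V p) * (D / a) * (1 - \<epsilon> p) = L p / (a * (ln (V p) + c))"
      using elim \<open>D > 0\<close> \<open>a > 0\<close> \<open>c \<ge> 0\<close> by (simp add: \<epsilon>_def divide_simps)
    also have "\<dots> \<le> real (n p)"
      using elim \<open>a > 0\<close> \<open>c \<ge> 0\<close> by (simp add: divide_le_eq mult_ac)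
    finally show ?case .
  qed
  ultimately show ?thesis
    by auto
qed

theorem pooled_data_merge_converse:
  fixes \<pi> :: "nat \<Rightarrow> real" and cnt :: "nat \<Rightarrow> nat \<Rightarrow> nat" and q :: "nat \<Rightarrow> real" and n :: "nat \<Rightarrow> nat"
    and dec :: "nat \<Rightarrow> (nat \<Rightarrow> nat \<Rightarrow> bool) \<Rightarrow> (nat \<Rightarrow> nat \<Rightarrow> nat) \<Rightarrow> nat \<Rightarrow> nat"
  assumes G: "G \<subseteq> {0..<d}" "card G \<ge> 2" and pi_pos: "\<And>t. t \<in> G \<Longrightarrow> \<pi> t > 0"
    and cnt_sum: "\<And>p. (\<Sum>t<d. cnt p t) = p"
    and cnt_round: "\<And>p t. t \<in> G \<Longrightarrow> \<bar>real (cnt p t) - real p * \<pi> t\<bar> \<le> 1"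
    and q_range: "\<And>p. 0 \<le> q p \<and> q p \<le> 1"
    and pq: "filterlim (\<lambda>p. real p * q p) at_top sequentially"
    and pq': "filterlim (\<lambda>p. real p * (1 - q p)) at_top sequentially"
    and \<delta>: "\<delta> < 1"
    and succ: "\<forall>\<^sub>F p in sequentially. error_prob d (n p) p (cnt p) (q p) (dec p) \<le> \<delta>"
  shows "\<exists>\<epsilon> :: nat \<Rightarrow> real. \<epsilon> \<longlonglongrightarrow> 0 \<and>
    (\<forall>\<^sub>F p in sequentially. real (n p) \<ge> real p / ln (real p * q p * (1 - q p)) *
       (2 * merge_entropy_loss \<pi> G / real (card G - 1)) * (1 - \<epsilon> p))"
proof -
  obtain g where g: "g \<in> G"
    using G(2) by fastforce
  have finG: "finite G"
    using G(1) finite_subset by blast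
  define L where "L = (\<lambda>p. real (\<Sum>t\<in>G. cnt p t) * ln (real (\<Sum>t\<in>G. cnt p t))
    - (\<Sum>t\<in>G. real (cnt p t) * ln (real (cnt p t))) - (\<Sum>t\<in>G. 1 + ln (real (cnt p t))) + ln ((1 - \<delta>) / 2))"
  have "(\<lambda>p. L p / real p) \<longlonglongrightarrow> merge_entropy_loss \<pi> G + 0"
    unfolding L_def add_divide_distrib
    using finG g pi_pos cnt_round by (intro tendsto_add tendsto_multinomial_entropy lim_const_over_n) auto
  then have L: "(\<lambda>p. L p / real p) \<longlonglongrightarrow> merge_entropy_loss \<pi> G"
    by simp
  have V: "filterlim (\<lambda>p. real p * q p * (1 - q p)) at_top sequentially"
    using q_range pq pq' by (rule filterlim_mult_one_minus_at_top)
  have "\<forall>\<^sub>F p in sequentially. 0 < q p \<and> q p < 1"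
    using pq[unfolded filterlim_at_top_dense, rule_format, of 0] pq'[unfolded filterlim_at_top_dense, rule_format, of 0]
    by eventually_elim (auto simp: zero_less_mult_iff)
  moreover have "\<forall>\<^sub>F p in sequentially. \<forall>t\<in>G. cnt p t \<ge> 1"
    using finG pi_pos cnt_round by (rule eventually_cnt_ge_one)
  moreover have "\<forall>\<^sub>F p in sequentially. 1 \<le> real p * q p * (1 - q p)"
    using V[unfolded filterlim_at_top] by blast
  ultimately have "\<forall>\<^sub>F p in sequentially. L p \<le> real (card G - 1) / 2 * real (n p) *
      (ln (real p * q p * (1 - q p)) + 2 * (2 / (1 - \<delta>) + ln 4))"
    using succ
  proof eventually_elim
    case (elim p)
    then show ?case
      unfolding L_def using G g cnt_sum \<delta> by (intro multinomial_entropy_le_tests) auto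
  qed
  then have "\<exists>\<epsilon> :: nat \<Rightarrow> real. \<epsilon> \<longlonglongrightarrow> 0 \<and> (\<forall>\<^sub>F p in sequentially. real (n p) \<ge>
      real p / ln (real p * q p * (1 - q p)) * (merge_entropy_loss \<pi> G / (real (card G - 1) / 2)) * (1 - \<epsilon> p))"
    using L V merge_entropy_loss_pos[OF finG G(2) pi_pos] G(2) \<delta>
    by (intro lower_bound_from_log_bound) auto
  then show ?thesis
    by (simp add: field_simps)
qed

theorem mainTheorem5:
  fixes d :: nat and \<pi> :: "nat \<Rightarrow> real"
    and cnt :: "nat \<Rightarrow> nat \<Rightarrow> nat"
    and q :: "nat \<Rightarrow> real" and n :: "nat \<Rightarrow> nat"
    and dec :: "nat \<Rightarrow> (nat \<Rightarrow> nat \<Rightarrow> bool) \<Rightarrow> (nat \<Rightarrow> nat \<Rightarrow> nat) \<Rightarrow> nat \<Rightarrow> nat"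
    and \<delta> :: real
  assumes d2: "d \<ge> 2"
    and pi_pos: "\<forall>t<d. \<pi> t > 0"
    and pi_sum: "(\<Sum>t<d. \<pi> t) = 1"
    and cnt_sum: "\<forall>p. (\<Sum>t<d. cnt p t) = p"
    and cnt_round: "\<forall>p. \<forall>t<d. \<bar>real (cnt p t) - real p * \<pi> t\<bar> \<le> 1"
    and q_range: "\<forall>p. 0 \<le> q p \<and> q p \<le> 1"
    and pq: "filterlim (\<lambda>p. real p * q p) at_top sequentially"
    and pq': "filterlim (\<lambda>p. real p * (1 - q p)) at_top sequentially"
    and delta: "0 < \<delta>" "\<delta> < 1"
    and succ: "\<forall>\<^sub>F p in sequentially. error_prob d (n p) p (cnt p) (q p) (dec p) \<le> \<delta>"
  shows "\<exists>\<epsilon> :: nat \<Rightarrow> real. \<epsilon> \<longlonglongrightarrow> 0 \<and>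
    (\<forall>\<^sub>F p in sequentially.
       real (n p) \<ge> real p / ln (real p * q p * (1 - q p)) *
         (MAX r\<in>{1..d-1}. 2 * (entropy_vec d \<pi> - entropy_list (pi_r d \<pi> r)) / real (d - r))
         * (1 - \<delta> - \<epsilon> p))"
proof -
  obtain G where G: "G \<subseteq> {0..<d}" "card G \<ge> 2" and max_eq: "(MAX r\<in>{1..d-1}.
      2 * (entropy_vec d \<pi> - entropy_list (pi_r d \<pi> r)) / real (d - r)) = 2 * merge_entropy_loss \<pi> G / real (card G - 1)"
    using max_entropy_gap_eq_merge[OF d2] by blast
  have G_pos: "\<And>t. t \<in> G \<Longrightarrow> \<pi> t > 0" and round: "\<And>p t. t \<in> G \<Longrightarrow> \<bar>real (cnt p t) - real p * \<pi> t\<bar> \<le> 1"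
    using G(1) pi_pos cnt_round by auto
  obtain \<epsilon> :: "nat \<Rightarrow> real" where "\<epsilon> \<longlonglongrightarrow> 0" and bound: "\<forall>\<^sub>F p in sequentially.
      real (n p) \<ge> real p / ln (real p * q p * (1 - q p)) * (2 * merge_entropy_loss \<pi> G / real (card G - 1)) * (1 - \<epsilon> p)"
    using pooled_data_merge_converse[OF G G_pos _ round _ pq pq' delta(2) succ] cnt_sum q_range by blast
  have "merge_entropy_loss \<pi> G > 0"
    using G G_pos by (intro merge_entropy_loss_pos) (auto intro: finite_subset)
  have "\<forall>\<^sub>F p in sequentially. ln (real p * q p * (1 - q p)) > 0"
    using filterlim_compose[OF ln_at_top filterlim_mult_one_minus_at_top[OF _ pq pq']] q_range
    by (simp add: filterlim_at_top_dense)
  with bound have "\<forall>\<^sub>F p in sequentially. real p / ln (real p * q p * (1 - q p)) *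
      (2 * merge_entropy_loss \<pi> G / real (card G - 1)) * (1 - \<delta> - \<epsilon> p) \<le> real (n p)"
    by eventually_elim (rule order_trans[OF mult_left_mono], use delta \<open>merge_entropy_loss \<pi> G > 0\<close> in auto)
  with \<open>\<epsilon> \<longlonglongrightarrow> 0\<close> show ?thesis
    unfolding max_eq by blast
qed

end
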